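(* Let $e\ge 1$ and let $(x_n)_{n\in\mathbb{Z}}$ be any doubly infinite path in $X_{PGL_2(F)}$. Then there exist $\alpha,\tau\in\hat G^{(e)}$ such that $\alpha(x_n)=x_{-n}$ and $\tau(x_n)=x_{n+1}$ for all $n\in\mathbb{Z}$.
   Context: Let $F$ be a non-archimedean local field with ring of integers $\mathfrak{o}$, uniformizer $\varpi$, and finite residue field of cardinality $q$. $X=X_{PGL_2(F)}$ is the Bruhat–Tits tree of $PGL_2(F)$: its vertices are homothety classes $[L]$ (under $F^\times$) of $\mathfrak{o}$-lattices $L\subset F^2$, and $[L],[L']$ are joined by an edge iff there are representatives with $\varpi L\subsetneq L'\subsetneq L$; it is a $(q+1)$-regular tree. $d$ is the path-length distance on vertices; $\mathrm{Aut}(X)$ is the group of distance-preserving bijections of the vertex set, with the topology of pointwise convergence. $GL_2(F)$ acts on lattices through its linear action on $F^2$, the centre acts trivially, and this gives an embedding $PGL_2(F)\hookrightarrow\mathrm{Aut}(X)$. For an edge $\eta=\{x_1,x_2\}$ and $e\ge1$, $B(\eta,e)=\{y: \min(d(y,x_1),d(y,x_2))\le e\}$. Define $\hat G^{(e)}=\{g\in\mathrm{Aut}(X):\ \text{for every edge }\eta\ \text{there is } g'\in PGL_2(F)\text{ with } g|_{B(\eta,e)}=g'|_{B(\eta,e)}\}$. A doubly infinite path is a sequence $(x_n)_{n\in\mathbb{Z}}$ of distinct vertices with $x_n,x_{n+1}$ adjacent for all $n$. *)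

theory Defs
  imports Main
begin

text \<open>A non-archimedean local field is modelled as a field carrying a normalised
discrete valuation val (val x is meaningful for x nonzero only; val 0 is ignored)
which is surjective onto the integers, complete for the induced metric, and has
finite residue field.\<close>

definition ring_int :: "('a::field \<Rightarrow> int) \<Rightarrow> 'a set" where
  "ring_int val = {x. x = 0 \<or> 0 \<le> val x}"

definition max_ideal :: "('a::field \<Rightarrow> int) \<Rightarrow> 'a set" where
  "max_ideal val = {x. x = 0 \<or> 1 \<le> val x}"

definition residue_class :: "('a::field \<Rightarrow> int) \<Rightarrow> 'a \<Rightarrow> 'a set" where
  "residue_class val x = {y \<in> ring_int val. y - x \<in> max_ideal val}"

definition nonarch_local_field :: "('a::field \<Rightarrow> int) \<Rightarrow> bool" where
  "nonarch_local_field val \<longleftrightarrow>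
     (\<forall>x y. x \<noteq> 0 \<longrightarrow> y \<noteq> 0 \<longrightarrow> val (x * y) = val x + val y) \<and>
     (\<forall>x y. x \<noteq> 0 \<longrightarrow> y \<noteq> 0 \<longrightarrow> x + y \<noteq> 0 \<longrightarrow> min (val x) (val y) \<le> val (x + y)) \<and>
     (\<forall>k. \<exists>x. x \<noteq> 0 \<and> val x = k) \<and>
     (\<forall>s :: nat \<Rightarrow> 'a.
        (\<forall>N::int. \<exists>M. \<forall>m\<ge>M. \<forall>n\<ge>M. s m - s n = 0 \<or> N \<le> val (s m - s n)) \<longrightarrow>
        (\<exists>l. \<forall>N::int. \<exists>M. \<forall>n\<ge>M. s n - l = 0 \<or> N \<le> val (s n - l))) \<and>
     finite (residue_class val ` ring_int val)"

definition lattice :: "('a::field \<Rightarrow> int) \<Rightarrow> ('a \<times> 'a) set \<Rightarrow> bool" where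
  "lattice val L \<longleftrightarrow> (\<exists>u1 u2 w1 w2. u1 * w2 - u2 * w1 \<noteq> 0 \<and>
      L = {(a * u1 + b * w1, a * u2 + b * w2) | a b. a \<in> ring_int val \<and> b \<in> ring_int val})"

definition scale_set :: "'a::field \<Rightarrow> ('a \<times> 'a) set \<Rightarrow> ('a \<times> 'a) set" where
  "scale_set c L = (\<lambda>(p, r). (c * p, c * r)) ` L"

text \<open>Vertices: homothety classes of lattices, represented as sets of lattices.\<close>

definition hclass :: "('a::field \<times> 'a) set \<Rightarrow> ('a \<times> 'a) set set" where
  "hclass L = {scale_set c L | c. c \<noteq> 0}"

definition vertices :: "('a::field \<Rightarrow> int) \<Rightarrow> ('a \<times> 'a) set set set" where
  "vertices val = {hclass L | L. lattice val L}"

definition adj :: "('a::field \<Rightarrow> int) \<Rightarrow> ('a \<times> 'a) set set \<Rightarrow> ('a \<times> 'a) set set \<Rightarrow> bool" where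
  "adj val x y \<longleftrightarrow> x \<in> vertices val \<and> y \<in> vertices val \<and>
     (\<exists>L\<in>x. \<exists>L'\<in>y. \<exists>\<pi>. \<pi> \<noteq> 0 \<and> val \<pi> = 1 \<and> scale_set \<pi> L \<subset> L' \<and> L' \<subset> L)"

definition dist_tree :: "('a::field \<Rightarrow> int) \<Rightarrow> ('a \<times> 'a) set set \<Rightarrow> ('a \<times> 'a) set set \<Rightarrow> nat" where
  "dist_tree val x y = (LEAST n. \<exists>p :: nat \<Rightarrow> ('a \<times> 'a) set set.
      p 0 = x \<and> p n = y \<and> (\<forall>i<n. adj val (p i) (p (Suc i))))"

definition Aut :: "('a::field \<Rightarrow> int) \<Rightarrow> (('a \<times> 'a) set set \<Rightarrow> ('a \<times> 'a) set set) set" where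
  "Aut val = {g. bij_betw g (vertices val) (vertices val) \<and>
      (\<forall>x\<in>vertices val. \<forall>y\<in>vertices val. dist_tree val (g x) (g y) = dist_tree val x y)}"

text \<open>GL_2(F) matrices (a b; c d) and their action on vertices (centre acts trivially,
so this is the action of PGL_2(F)).\<close>

definition mat_vec :: "'a::field \<times> 'a \<times> 'a \<times> 'a \<Rightarrow> 'a \<times> 'a \<Rightarrow> 'a \<times> 'a" where
  "mat_vec M v = (case M of (a, b, c, d) \<Rightarrow> case v of (p, r) \<Rightarrow> (a * p + b * r, c * p + d * r))"

definition GL2 :: "('a::field \<times> 'a \<times> 'a \<times> 'a) set" where
  "GL2 = {(a, b, c, d). a * d - b * c \<noteq> 0}"

definition mat_act :: "'a::field \<times> 'a \<times> 'a \<times> 'a \<Rightarrow> ('a \<times> 'a) set set \<Rightarrow> ('a \<times> 'a) set set" where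
  "mat_act M x = (\<lambda>L. mat_vec M ` L) ` x"

definition edge_ball :: "('a::field \<Rightarrow> int) \<Rightarrow> ('a \<times> 'a) set set \<Rightarrow> ('a \<times> 'a) set set \<Rightarrow> nat
    \<Rightarrow> ('a \<times> 'a) set set set" where
  "edge_ball val x1 x2 e = {y \<in> vertices val. min (dist_tree val y x1) (dist_tree val y x2) \<le> e}"

definition Ghat :: "('a::field \<Rightarrow> int) \<Rightarrow> nat \<Rightarrow> (('a \<times> 'a) set set \<Rightarrow> ('a \<times> 'a) set set) set" where
  "Ghat val e = {g \<in> Aut val. \<forall>x1 x2. adj val x1 x2 \<longrightarrow>
      (\<exists>M\<in>GL2. \<forall>y\<in>edge_ball val x1 x2 e. g y = mat_act M y)}"

definition doubly_infinite_path :: "('a::field \<Rightarrow> int) \<Rightarrow> (int \<Rightarrow> ('a \<times> 'a) set set) \<Rightarrow> bool" where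
  "doubly_infinite_path val x \<longleftrightarrow> inj x \<and> (\<forall>n. x n \<in> vertices val) \<and>
      (\<forall>n. adj val (x n) (x (n + 1)))"

end

theory Submission
  imports Defs "HOL-Library.Product_Plus"
begin

text \<open>
  Both required automorphisms can be taken inside PGL_2(F) itself, and every element
  of PGL_2(F) lies in Ghat for every e (it agrees with itself on every ball).  So it suffices
  to find an o-basis (a, c) of F^2 that is adapted to the path: x_k is the class of the
  lattice o a + o pi^k c and x_{-k} the class of o c + o pi^k a, for k >= 0.  Then the matrix
  swapping a and c reflects the path, and the matrix fixing a and sending c to pi c shifts it.
\<close>

lemma chain_choice:
  assumes step: "\<And>k x. x \<in> A k \<Longrightarrow> \<exists>x'\<in>A (Suc k). R x x'" and x0: "x0 \<in> A 0"
  shows "\<exists>f. f 0 = x0 \<and> (\<forall>k. f k \<in> A k \<and> R (f k) (f (Suc k)))"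
proof -
  have "\<exists>f. \<forall>k. (f k \<in> A k \<and> (k = 0 \<longrightarrow> f k = x0)) \<and> R (f k) (f (Suc k))"
  proof (rule dependent_nat_choice)
    show "\<exists>x. x \<in> A 0 \<and> (0 = (0::nat) \<longrightarrow> x = x0)" using x0 by blast
  next
    fix x k assume "x \<in> A k \<and> (k = 0 \<longrightarrow> x = x0)"
    then show "\<exists>y. (y \<in> A (Suc k) \<and> (Suc k = 0 \<longrightarrow> y = x0)) \<and> R x y" using step by blast
  qed
  then show ?thesis by blast
qed

text \<open>Scalar multiplication on F^2 (addition comes from the product group structure).\<close>

definition smul :: "'a::times \<Rightarrow> 'a \<times> 'a \<Rightarrow> 'a \<times> 'a"  (infixr \<open>*\<^sub>v\<close> 75) where
  "r *\<^sub>v v = (r * fst v, r * snd v)"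

definition det2 :: "'a::comm_ring \<times> 'a \<Rightarrow> 'a \<times> 'a \<Rightarrow> 'a" where
  "det2 u w = fst u * snd w - snd u * fst w"

lemma smul_simps [simp]:
  "r *\<^sub>v (a, b) = (r * a, r * b)" "fst (r *\<^sub>v v) = r * fst v" "snd (r *\<^sub>v v) = r * snd v"
  by (simp_all add: smul_def)

lemma smul_one [simp]: "(1::'a::monoid_mult) *\<^sub>v v = v"
  by (simp add: smul_def)

lemma smul_zero [simp]: "(0::'a::mult_zero) *\<^sub>v v = 0"
  by (simp add: smul_def zero_prod_def)

lemma smul_smul [simp]: "(r::'a::semigroup_mult) *\<^sub>v s *\<^sub>v v = (r * s) *\<^sub>v v"
  by (simp add: smul_def mult.assoc)

lemma coord_unique:
  fixes u w :: "'a::field \<times> 'a"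
  assumes "det2 u w \<noteq> 0" and "r *\<^sub>v u + s *\<^sub>v w = r' *\<^sub>v u + s' *\<^sub>v w"
  shows "r = r' \<and> s = s'"
proof -
  obtain u1 u2 w1 w2 where uw: "u = (u1, u2)" "w = (w1, w2)" by fastforce
  have e1: "(r - r') * u1 + (s - s') * w1 = 0" and e2: "(r - r') * u2 + (s - s') * w2 = 0"
    using assms(2) uw by (auto simp: algebra_simps)
  have "(r - r') * det2 u w = w2 * ((r - r') * u1 + (s - s') * w1) - w1 * ((r - r') * u2 + (s - s') * w2)"
    and "(s - s') * det2 u w = u1 * ((r - r') * u2 + (s - s') * w2) - u2 * ((r - r') * u1 + (s - s') * w1)"
    unfolding uw det2_def by (simp_all add: algebra_simps)
  then have "(r - r') * det2 u w = 0" "(s - s') * det2 u w = 0"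
    unfolding e1 e2 by simp_all
  then show ?thesis using assms(1) by simp
qed

section \<open>The valuation\<close>

locale local_field =
  fixes val :: "'a::field \<Rightarrow> int"
  assumes local_field: "nonarch_local_field val"
begin

abbreviation ints :: "'a set" where "ints \<equiv> ring_int val"

definition val_ge :: "int \<Rightarrow> 'a set" where
  "val_ge n = {z. z = 0 \<or> n \<le> val z}"

lemma val_mult: "x \<noteq> 0 \<Longrightarrow> y \<noteq> 0 \<Longrightarrow> val (x * y) = val x + val y"
  using local_field unfolding nonarch_local_field_def by blast

lemma val_ultrametric: "x \<noteq> 0 \<Longrightarrow> y \<noteq> 0 \<Longrightarrow> x + y \<noteq> 0 \<Longrightarrow> min (val x) (val y) \<le> val (x + y)"
  using local_field unfolding nonarch_local_field_def by blast

lemma val_surj: "\<exists>x. x \<noteq> 0 \<and> val x = k"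
  using local_field unfolding nonarch_local_field_def by blast

lemma val_complete:
  fixes s :: "nat \<Rightarrow> 'a"
  assumes "\<forall>N::int. \<exists>M. \<forall>m\<ge>M. \<forall>n\<ge>M. s m - s n = 0 \<or> N \<le> val (s m - s n)"
  shows "\<exists>l. \<forall>N::int. \<exists>M. \<forall>n\<ge>M. s n - l = 0 \<or> N \<le> val (s n - l)"
  using local_field assms unfolding nonarch_local_field_def by blast

lemma val_one [simp]: "val 1 = 0"
  using val_mult[of 1 1] by simp

lemma val_inverse: "x \<noteq> 0 \<Longrightarrow> val (inverse x) = - val x"
  using val_mult[of x "inverse x"] by simp

lemma val_uminus [simp]: "val (- x) = val x"
proof (cases "x = 0")
  case False
  have "val (-1) = 0" using val_mult[of "-1" "-1"] by simp
  then show ?thesis using val_mult[of "-1" x] False by simp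
qed simp

lemma val_divide: "x \<noteq> 0 \<Longrightarrow> y \<noteq> 0 \<Longrightarrow> val (x / y) = val x - val y"
  by (simp add: divide_inverse val_mult val_inverse)

lemma val_power: "x \<noteq> 0 \<Longrightarrow> val (x ^ k) = int k * val x"
  by (induction k) (auto simp: val_mult algebra_simps)

lemma val_ge_add: "a \<in> val_ge n \<Longrightarrow> b \<in> val_ge n \<Longrightarrow> a + b \<in> val_ge n"
  using val_ultrametric[of a b] unfolding val_ge_def by fastforce

lemma val_ge_uminus: "a \<in> val_ge n \<Longrightarrow> - a \<in> val_ge n"
  unfolding val_ge_def by auto

lemma val_ge_diff: "a \<in> val_ge n \<Longrightarrow> b \<in> val_ge n \<Longrightarrow> a - b \<in> val_ge n"
  using val_ge_add[of a n "- b"] val_ge_uminus[of b n] by simp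

lemma val_ge_mult: "a \<in> val_ge n \<Longrightarrow> b \<in> val_ge m \<Longrightarrow> a * b \<in> val_ge (n + m)"
  unfolding val_ge_def by (cases "a = 0"; cases "b = 0") (auto simp: val_mult)

lemma val_ge_mono: "a \<in> val_ge n \<Longrightarrow> m \<le> n \<Longrightarrow> a \<in> val_ge m"
  unfolding val_ge_def by auto

lemma zero_val_ge [simp]: "0 \<in> val_ge n"
  unfolding val_ge_def by simp

lemma ints_eq: "ints = val_ge 0"
  unfolding val_ge_def ring_int_def by auto

lemma ints_add: "a \<in> ints \<Longrightarrow> b \<in> ints \<Longrightarrow> a + b \<in> ints"
  and ints_diff: "a \<in> ints \<Longrightarrow> b \<in> ints \<Longrightarrow> a - b \<in> ints"
  and ints_uminus: "a \<in> ints \<Longrightarrow> - a \<in> ints"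
  and ints_mult: "a \<in> ints \<Longrightarrow> b \<in> ints \<Longrightarrow> a * b \<in> ints"
  using val_ge_add val_ge_diff val_ge_uminus val_ge_mult[of a 0 b 0] by (auto simp: ints_eq)

lemma zero_ints [simp]: "0 \<in> ints" and one_ints [simp]: "1 \<in> ints"
  unfolding ring_int_def by auto

lemma unit_ints: "a \<noteq> 0 \<Longrightarrow> val a = 0 \<Longrightarrow> a \<in> ints"
  and unit_inverse: "a \<noteq> 0 \<Longrightarrow> val a = 0 \<Longrightarrow> inverse a \<in> ints"
  unfolding ring_int_def by (simp_all add: val_inverse)

lemma ints_cases: "a \<in> ints \<Longrightarrow> a \<in> val_ge 1 \<or> (a \<noteq> 0 \<and> val a = 0)"
  unfolding ring_int_def val_ge_def by auto

definition unif :: 'a where "unif = (SOME x. x \<noteq> 0 \<and> val x = 1)"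

lemma unif_nonzero: "unif \<noteq> 0" and val_unif: "val unif = 1"
  using someI_ex[OF val_surj[of 1]] unfolding unif_def by auto

lemma unif_power_nonzero: "unif ^ n \<noteq> 0"
  using unif_nonzero by simp

lemma val_ge_unif_power: "unif ^ n \<in> val_ge (int n)"
  unfolding val_ge_def using val_power[OF unif_nonzero] val_unif by simp

lemma unif_power_ints: "unif ^ n \<in> ints"
  using val_ge_mono[OF val_ge_unif_power] by (simp add: ints_eq)

lemma divide_unif_power: "z \<in> val_ge (int n) \<Longrightarrow> z / unif ^ n \<in> ints"
  unfolding val_ge_def ring_int_def using unif_power_nonzero
  by (cases "z = 0") (auto simp: val_divide val_power[OF unif_nonzero] val_unif)

lemma divide_unif: "z \<in> val_ge 1 \<Longrightarrow> z / unif \<in> ints"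
  using divide_unif_power[of z 1] by simp

section \<open>Lattices spanned by two vectors\<close>

definition ospan :: "'a \<times> 'a \<Rightarrow> 'a \<times> 'a \<Rightarrow> ('a \<times> 'a) set" where
  "ospan u w = {r *\<^sub>v u + s *\<^sub>v w | r s. r \<in> ints \<and> s \<in> ints}"

definition submodule :: "('a \<times> 'a) set \<Rightarrow> bool" where
  "submodule L \<longleftrightarrow> (\<forall>x\<in>L. \<forall>y\<in>L. x + y \<in> L) \<and> (\<forall>r\<in>ints. \<forall>x\<in>L. r *\<^sub>v x \<in> L)"

lemma submodule_add: "submodule L \<Longrightarrow> x \<in> L \<Longrightarrow> y \<in> L \<Longrightarrow> x + y \<in> L"
  and submodule_smul: "submodule L \<Longrightarrow> r \<in> ints \<Longrightarrow> x \<in> L \<Longrightarrow> r *\<^sub>v x \<in> L"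
  unfolding submodule_def by blast+

lemma submodule_diff: "submodule L \<Longrightarrow> x \<in> L \<Longrightarrow> y \<in> L \<Longrightarrow> x - y \<in> L"
proof -
  assume L: "submodule L" "x \<in> L" "y \<in> L"
  have "x - y = x + (- 1) *\<^sub>v y" by (simp add: prod_eq_iff)
  then show ?thesis using L submodule_add submodule_smul[OF L(1) ints_uminus[OF one_ints]] by metis
qed

lemma mem_ospan: "z \<in> ospan u w \<longleftrightarrow> (\<exists>r s. r \<in> ints \<and> s \<in> ints \<and> z = r *\<^sub>v u + s *\<^sub>v w)"
  unfolding ospan_def by blast

lemma ospan_mem_comb: "r \<in> ints \<Longrightarrow> s \<in> ints \<Longrightarrow> r *\<^sub>v u + s *\<^sub>v w \<in> ospan u w"
  unfolding mem_ospan by blast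

lemma submodule_ospan: "submodule (ospan u w)"
  unfolding submodule_def
proof (intro conjI ballI)
  fix x y assume "x \<in> ospan u w" "y \<in> ospan u w"
  then obtain r s r' s' where "r \<in> ints" "s \<in> ints" "r' \<in> ints" "s' \<in> ints"
    "x = r *\<^sub>v u + s *\<^sub>v w" "y = r' *\<^sub>v u + s' *\<^sub>v w" unfolding mem_ospan by blast
  then show "x + y \<in> ospan u w" unfolding mem_ospan
    by (intro exI[of _ "r + r'"] exI[of _ "s + s'"]) (auto simp: ints_add prod_eq_iff algebra_simps)
next
  fix c x assume "c \<in> ints" "x \<in> ospan u w"
  then obtain r s where "r \<in> ints" "s \<in> ints" "x = r *\<^sub>v u + s *\<^sub>v w" unfolding mem_ospan by blast
  then show "c *\<^sub>v x \<in> ospan u w" unfolding mem_ospan using \<open>c \<in> ints\<close>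
    by (intro exI[of _ "c * r"] exI[of _ "c * s"]) (auto simp: ints_mult prod_eq_iff algebra_simps)
qed

lemma ospan_gen1: "u \<in> ospan u w"
  and ospan_gen2: "w \<in> ospan u w"
  using ospan_mem_comb[of 1 0 u w] ospan_mem_comb[of 0 1 u w] by (simp_all add: prod_eq_iff)

lemma ospan_least: "submodule L \<Longrightarrow> u \<in> L \<Longrightarrow> w \<in> L \<Longrightarrow> ospan u w \<subseteq> L"
  unfolding submodule_def ospan_def by blast

lemma ospan_eqI:
  "u \<in> ospan u' w' \<Longrightarrow> w \<in> ospan u' w' \<Longrightarrow> u' \<in> ospan u w \<Longrightarrow> w' \<in> ospan u w \<Longrightarrow> ospan u w = ospan u' w'"
  using ospan_least[OF submodule_ospan] by blast

lemma ospan_comm: "ospan u w = ospan w u"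
  by (intro ospan_eqI ospan_gen1 ospan_gen2)

lemma ospan_shear: "r \<in> ints \<Longrightarrow> ospan (u + r *\<^sub>v w) w = ospan u w"
proof (rule ospan_eqI)
  assume r: "r \<in> ints"
  show "u + r *\<^sub>v w \<in> ospan u w" using ospan_mem_comb[OF one_ints r, of u w] by simp
  have "u = 1 *\<^sub>v (u + r *\<^sub>v w) + (- r) *\<^sub>v w" by (simp add: prod_eq_iff)
  then show "u \<in> ospan (u + r *\<^sub>v w) w" using ospan_mem_comb[OF one_ints ints_uminus[OF r]] by metis
qed (rule ospan_gen2)+

lemma ospan_unit:
  assumes r: "r \<in> ints" and s: "s \<noteq> 0" "val s = 0"
  shows "ospan u (r *\<^sub>v u + s *\<^sub>v w) = ospan u w"
proof (rule ospan_eqI)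
  show "r *\<^sub>v u + s *\<^sub>v w \<in> ospan u w" using ospan_mem_comb r unit_ints[OF s] by blast
  have "w = (- r * inverse s) *\<^sub>v u + inverse s *\<^sub>v (r *\<^sub>v u + s *\<^sub>v w)"
    using s by (simp add: prod_eq_iff algebra_simps)
  then show "w \<in> ospan u (r *\<^sub>v u + s *\<^sub>v w)"
    using ospan_mem_comb[OF ints_mult[OF ints_uminus[OF r] unit_inverse[OF s]] unit_inverse[OF s]] by metis
qed (rule ospan_gen1)+

lemma scale_ospan: "scale_set c (ospan u w) = ospan (c *\<^sub>v u) (c *\<^sub>v w)"
proof -
  have e: "(\<lambda>(p, q). (c * p, c * q)) (r *\<^sub>v u + s *\<^sub>v w) = r *\<^sub>v (c *\<^sub>v u) + s *\<^sub>v (c *\<^sub>v w)"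
    for r s by (simp add: split_def prod_eq_iff algebra_simps)
  have "(\<lambda>(p, q). (c * p, c * q)) ` {r *\<^sub>v u + s *\<^sub>v w | r s. r \<in> ints \<and> s \<in> ints}
      = {(\<lambda>(p, q). (c * p, c * q)) (r *\<^sub>v u + s *\<^sub>v w) | r s. r \<in> ints \<and> s \<in> ints}"
    by blast
  then show ?thesis unfolding scale_set_def ospan_def e .
qed

lemma lattice_iff: "lattice val L \<longleftrightarrow> (\<exists>u w. det2 u w \<noteq> 0 \<and> L = ospan u w)"
proof -
  have "{(a * u1 + b * w1, a * u2 + b * w2) |a b. a \<in> ints \<and> b \<in> ints} = ospan (u1, u2) (w1, w2)"
    for u1 u2 w1 w2 unfolding ospan_def by simp
  then show ?thesis unfolding lattice_def det2_def by (auto simp: split_paired_Ex)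
qed

lemma submodule_lattice: "lattice val L \<Longrightarrow> submodule L"
  unfolding lattice_iff using submodule_ospan by blast

lemma val_ge_comb_in_unif_ospan:
  "r \<in> val_ge 1 \<Longrightarrow> s \<in> val_ge 1 \<Longrightarrow> r *\<^sub>v a + s *\<^sub>v b \<in> ospan (unif *\<^sub>v a) (unif *\<^sub>v b)"
proof -
  assume r: "r \<in> val_ge 1" and s: "s \<in> val_ge 1"
  have "r *\<^sub>v a + s *\<^sub>v b = (r / unif) *\<^sub>v (unif *\<^sub>v a) + (s / unif) *\<^sub>v (unif *\<^sub>v b)"
    using unif_nonzero by (simp add: prod_eq_iff)
  then show ?thesis using ospan_mem_comb[OF divide_unif[OF r] divide_unif[OF s]] by metis
qed

lemma unif_ospan_subset: "ospan (unif *\<^sub>v a) (unif *\<^sub>v b) \<subseteq> ospan a (unif *\<^sub>v b)"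
proof (rule ospan_least[OF submodule_ospan])
  show "unif *\<^sub>v a \<in> ospan a (unif *\<^sub>v b)"
    using ospan_mem_comb[of unif 0 a "unif *\<^sub>v b"] by (simp add: ring_int_def val_unif prod_eq_iff)
qed (rule ospan_gen2)

lemma basis_not_in_unif_ospan:
  assumes "det2 c d \<noteq> 0"
  shows "c \<notin> ospan (unif *\<^sub>v c) (unif *\<^sub>v d)"
proof
  assume "c \<in> ospan (unif *\<^sub>v c) (unif *\<^sub>v d)"
  then obtain e f where ef: "e \<in> ints" "f \<in> ints" "c = e *\<^sub>v (unif *\<^sub>v c) + f *\<^sub>v (unif *\<^sub>v d)"
    unfolding mem_ospan by blast
  then have "(e * unif) *\<^sub>v c + (f * unif) *\<^sub>v d = 1 *\<^sub>v c + 0 *\<^sub>v d"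
    by (simp add: prod_eq_iff algebra_simps)
  then have "e * unif = 1" using coord_unique[OF assms] by blast
  then have "val e + 1 = 0" using val_mult[of e unif] unif_nonzero val_unif by fastforce
  moreover have "0 \<le> val e" using ef(1) \<open>e * unif = 1\<close> unfolding ring_int_def by auto
  ultimately show False by simp
qed

section \<open>Neighbouring lattices\<close>

lemma neighbour_containing:
  assumes L': "submodule L'" "L' \<subseteq> ospan a b" "\<not> (a \<in> L' \<and> b \<in> L')"
    and t: "t \<in> ints" and eL: "a + t *\<^sub>v b \<in> L'" and bL: "unif *\<^sub>v b \<in> L'"
  shows "L' = ospan (a + t *\<^sub>v b) (unif *\<^sub>v b)"
proof
  show "ospan (a + t *\<^sub>v b) (unif *\<^sub>v b) \<subseteq> L'" by (rule ospan_least[OF L'(1) eL bL])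
  show "L' \<subseteq> ospan (a + t *\<^sub>v b) (unif *\<^sub>v b)"
  proof
    fix z assume zL: "z \<in> L'"
    then have "z \<in> ospan a b" using L'(2) by blast
    then obtain p q where pq: "p \<in> ints" "q \<in> ints" "z = p *\<^sub>v a + q *\<^sub>v b"
      unfolding mem_ospan by blast
    define k where "k = q - p * t"
    have k: "k \<in> ints" unfolding k_def using ints_diff[OF pq(2) ints_mult[OF pq(1) t]] .
    have "k *\<^sub>v b = z - p *\<^sub>v (a + t *\<^sub>v b)"
      unfolding k_def pq(3) by (simp add: prod_eq_iff algebra_simps)
    then have kb: "k *\<^sub>v b \<in> L'" using submodule_diff[OF L'(1) zL submodule_smul[OF L'(1) pq(1) eL]] by simp
    show "z \<in> ospan (a + t *\<^sub>v b) (unif *\<^sub>v b)"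
    proof (cases "k \<in> val_ge 1")
      case True
      have "z = p *\<^sub>v (a + t *\<^sub>v b) + (k / unif) *\<^sub>v (unif *\<^sub>v b)"
        unfolding pq(3) k_def using unif_nonzero by (simp add: prod_eq_iff field_simps)
      then show ?thesis using ospan_mem_comb[OF pq(1) divide_unif[OF True]] by metis
    next
      case False
      then have ku: "k \<noteq> 0" "val k = 0" using ints_cases[OF k] by auto
      have "b = inverse k *\<^sub>v (k *\<^sub>v b)" using ku by (simp add: prod_eq_iff)
      then have "b \<in> L'" using submodule_smul[OF L'(1) unit_inverse[OF ku] kb] by simp
      moreover have "a = (a + t *\<^sub>v b) - t *\<^sub>v b" by simp
      ultimately have "a \<in> L'" using submodule_diff[OF L'(1) eL submodule_smul[OF L'(1) t]] by metis
      then show ?thesis using \<open>b \<in> L'\<close> L'(3) by blast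
    qed
  qed
qed

text \<open>Classification of the submodules strictly between pi L and L = o a + o b (they
  correspond to the lines in L / pi L).\<close>

lemma neighbour_lattices:
  assumes L': "submodule L'"
    and below: "ospan (unif *\<^sub>v a) (unif *\<^sub>v b) \<subset> L'" and above: "L' \<subset> ospan a b"
  shows "(\<exists>t\<in>ints. L' = ospan (a + t *\<^sub>v b) (unif *\<^sub>v b)) \<or> L' = ospan b (unif *\<^sub>v a)"
proof -
  have not_both: "\<not> (a \<in> L' \<and> b \<in> L')" using ospan_least[OF L', of a b] above by blast
  have ua: "unif *\<^sub>v a \<in> L'" and ub: "unif *\<^sub>v b \<in> L'" using below ospan_gen1 ospan_gen2 by blast+
  obtain v where v: "v \<in> L'" "v \<notin> ospan (unif *\<^sub>v a) (unif *\<^sub>v b)" using below by blast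
  then have "v \<in> ospan a b" using above by blast
  then obtain r s where rs: "r \<in> ints" "s \<in> ints" "v = r *\<^sub>v a + s *\<^sub>v b"
    unfolding mem_ospan by blast
  show ?thesis
  proof (cases "r \<in> val_ge 1")
    case False
    then have ru: "r \<noteq> 0" "val r = 0" using ints_cases[OF rs(1)] by auto
    define t where "t = s * inverse r"
    have t: "t \<in> ints" unfolding t_def using ints_mult[OF rs(2) unit_inverse[OF ru]] .
    have "a + t *\<^sub>v b = inverse r *\<^sub>v v" unfolding t_def rs(3) using ru by (simp add: prod_eq_iff field_simps)
    then have "a + t *\<^sub>v b \<in> L'" using submodule_smul[OF L' unit_inverse[OF ru] v(1)] by simp
    then show ?thesis using neighbour_containing[OF L' _ not_both t _ ub] above t by blast
  next
    case True
    then have "s \<notin> val_ge 1" using v(2) val_ge_comb_in_unif_ospan rs(3) by blast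
    then have su: "s \<noteq> 0" "val s = 0" using ints_cases[OF rs(2)] by auto
    have "r * inverse s \<in> val_ge 1" using val_ge_mult[OF True, of "inverse s" 0] unit_inverse[OF su]
      by (simp add: ints_eq)
    from val_ge_comb_in_unif_ospan[OF this zero_val_ge, of a b]
    have "(r * inverse s) *\<^sub>v a \<in> L'" using below by auto
    moreover have "b = inverse s *\<^sub>v v - (r * inverse s) *\<^sub>v a"
      unfolding rs(3) using su by (simp add: prod_eq_iff field_simps)
    ultimately have "b + 0 *\<^sub>v a \<in> L'"
      using submodule_diff[OF L' submodule_smul[OF L' unit_inverse[OF su] v(1)]] by simp
    moreover have "L' \<subseteq> ospan b a" "\<not> (b \<in> L' \<and> a \<in> L')" using above not_both ospan_comm by auto
    ultimately have "L' = ospan (b + 0 *\<^sub>v a) (unif *\<^sub>v a)"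
      using neighbour_containing[OF L' _ _ zero_ints _ ua] by blast
    then show ?thesis by simp
  qed
qed

lemma det2_shear: "det2 (a + t *\<^sub>v b) b = det2 a b"
  by (simp add: det2_def algebra_simps)

lemma det2_swap: "det2 b a = - det2 a b"
  by (simp add: det2_def algebra_simps)

lemma neighbour_basis:
  assumes L: "lattice val L" and L': "submodule L'"
    and below: "scale_set unif L \<subset> L'" and above: "L' \<subset> L"
  shows "\<exists>a b. det2 a b \<noteq> 0 \<and> L = ospan a b \<and> L' = ospan a (unif *\<^sub>v b)"
proof -
  obtain a b where ab: "det2 a b \<noteq> 0" "L = ospan a b" using L unfolding lattice_iff by blast
  from neighbour_lattices[OF L'] below above
  consider t where "t \<in> ints" "L' = ospan (a + t *\<^sub>v b) (unif *\<^sub>v b)" | "L' = ospan b (unif *\<^sub>v a)"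
    unfolding ab(2) scale_ospan by blast
  then show ?thesis
  proof cases
    case 1
    show ?thesis
      by (rule exI[of _ "a + t *\<^sub>v b"], rule exI[of _ b])
        (use 1 ab det2_shear[of a t b] ospan_shear[OF 1(1), of a b] in auto)
  next
    case 2
    show ?thesis
      by (rule exI[of _ b], rule exI[of _ a]) (use 2 ab det2_swap[of a b] ospan_comm[of a b] in auto)
  qed
qed

lemma scale_scale: "scale_set d (scale_set c L) = scale_set (d * c) L"
  unfolding scale_set_def image_image by (simp add: split_def mult.assoc)

lemma scale_psubset:
  assumes c: "(c::'a) \<noteq> 0" and AB: "A \<subset> B"
  shows "scale_set c A \<subset> scale_set c B"
proof -
  have "inj (\<lambda>(p, r). (c * p, c * r))"
    using c unfolding inj_def by (simp add: split_def prod_eq_iff)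
  then show ?thesis unfolding scale_set_def using AB by (simp add: inj_image_subset_iff inj_image_eq_iff psubset_eq)
qed

lemma scale_one: "scale_set 1 L = L"
  unfolding scale_set_def by (simp add: split_def)

lemma lattice_scale:
  assumes "lattice val L" and c: "c \<noteq> 0"
  shows "lattice val (scale_set c L)"
proof -
  obtain u w where uw: "det2 u w \<noteq> 0" "L = ospan u w" using assms(1) unfolding lattice_iff by blast
  have "det2 (c *\<^sub>v u) (c *\<^sub>v w) = c * c * det2 u w" by (simp add: det2_def algebra_simps)
  then have "det2 (c *\<^sub>v u) (c *\<^sub>v w) \<noteq> 0" using uw(1) c by simp
  then show ?thesis unfolding lattice_iff uw(2) scale_ospan by blast
qed

lemma hclass_mem: "L \<in> hclass L"
  unfolding hclass_def using scale_one[of L] by force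

lemma hclass_scale: "c \<noteq> 0 \<Longrightarrow> hclass (scale_set c L) = hclass L"
  unfolding hclass_def
proof (intro equalityI subsetI)
  fix Z assume c: "c \<noteq> 0" and "Z \<in> {scale_set d (scale_set c L) |d. d \<noteq> 0}"
  then obtain d where "d \<noteq> 0" "Z = scale_set (d * c) L" using scale_scale by blast
  then show "Z \<in> {scale_set c L |c. c \<noteq> 0}" using c by auto
next
  fix Z assume c: "c \<noteq> 0" and "Z \<in> {scale_set d L |d. d \<noteq> 0}"
  then obtain d where d: "d \<noteq> 0" "Z = scale_set d L" by blast
  then have "Z = scale_set (d * inverse c) (scale_set c L)" using c by (simp add: scale_scale mult.assoc)
  then show "Z \<in> {scale_set d (scale_set c L) |d. d \<noteq> 0}" using c d by auto
qed

lemma vertex_rep: "X \<in> vertices val \<Longrightarrow> L \<in> X \<Longrightarrow> X = hclass L \<and> lattice val L"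
proof -
  assume "X \<in> vertices val" "L \<in> X"
  then obtain K where K: "lattice val K" "X = hclass K" unfolding vertices_def by blast
  then obtain c where "c \<noteq> 0" "L = scale_set c K" using \<open>L \<in> X\<close> unfolding hclass_def by blast
  then show ?thesis using K hclass_scale lattice_scale by auto
qed

lemma scale_unit_lattice:
  assumes "lattice val L" and u: "u \<noteq> 0" "val u = 0"
  shows "scale_set u L = L"
proof -
  obtain a b where L: "L = ospan a b" using assms(1) unfolding lattice_iff by blast
  have "ospan (u *\<^sub>v a) (u *\<^sub>v b) = ospan (u *\<^sub>v a) b"
    using ospan_unit[OF zero_ints u, of "u *\<^sub>v a" b] by simp
  also have "\<dots> = ospan a b"
    using ospan_unit[OF zero_ints u, of b a] by (simp add: ospan_comm)
  finally show ?thesis using L scale_ospan by simp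
qed

lemma adj_rep:
  assumes "adj val X Y" "L0 \<in> X"
  shows "\<exists>L'\<in>Y. scale_set unif L0 \<subset> L' \<and> L' \<subset> L0"
proof -
  obtain L L1 \<pi> where X: "X \<in> vertices val" and Y: "Y \<in> vertices val" and LX: "L \<in> X" and L1: "L1 \<in> Y"
    and p: "\<pi> \<noteq> 0" "val \<pi> = 1" and s: "scale_set \<pi> L \<subset> L1" "L1 \<subset> L"
    using assms(1) unfolding adj_def by blast
  obtain c where c: "c \<noteq> 0" "L0 = scale_set c L"
    using assms(2) vertex_rep[OF X LX] unfolding hclass_def by blast
  have L0: "lattice val L0" using vertex_rep[OF X assms(2)] by simp
  have cL1: "scale_set c L1 \<in> Y" using vertex_rep[OF Y L1] c(1) unfolding hclass_def by blast
  have u: "\<pi> / unif \<noteq> 0" "val (\<pi> / unif) = 0" using p unif_nonzero val_unif by (auto simp: val_divide)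
  have "scale_set c (scale_set \<pi> L) = scale_set unif (scale_set (\<pi> / unif) L0)"
    using c(2) unif_nonzero by (simp add: scale_scale algebra_simps)
  also have "\<dots> = scale_set unif L0" using scale_unit_lattice[OF L0 u] by simp
  finally have "scale_set unif L0 \<subset> scale_set c L1" using scale_psubset[OF c(1) s(1)] by simp
  moreover have "scale_set c L1 \<subset> L0" using scale_psubset[OF c(1) s(2)] c(2) by simp
  ultimately show ?thesis using cL1 by blast
qed

lemma adj_sym:
  assumes "adj val X Y"
  shows "adj val Y X"
proof -
  obtain L L' \<pi> where X: "X \<in> vertices val" and Y: "Y \<in> vertices val" and LX: "L \<in> X" and L'Y: "L' \<in> Y"
    and p: "\<pi> \<noteq> 0" "val \<pi> = 1" and s: "scale_set \<pi> L \<subset> L'" "L' \<subset> L"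
    using assms unfolding adj_def by blast
  have "scale_set \<pi> L \<in> X" using vertex_rep[OF X LX] p unfolding hclass_def by blast
  moreover have "scale_set \<pi> L' \<subset> scale_set \<pi> L" using scale_psubset[OF p(1) s(2)] .
  ultimately have "\<exists>La\<in>Y. \<exists>Lb\<in>X. scale_set \<pi> La \<subset> Lb \<and> Lb \<subset> La" using L'Y s(1) by blast
  then show ?thesis unfolding adj_def using X Y p by blast
qed

section \<open>Non-backtracking rays\<close>

lemma val_ge_telescope:
  fixes S :: "nat \<Rightarrow> 'a"
  assumes inc: "\<And>k. S (Suc k) - S k \<in> val_ge (int (Suc k))"
  shows "S m - S n \<in> val_ge (int (min m n))"
proof -
  have up: "S m - S n \<in> val_ge (int n)" if "n \<le> m" for m n
    using that
  proof (induction m)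
    case (Suc m)
    show ?case
    proof (cases "n = Suc m")
      case False
      then have "S m - S n \<in> val_ge (int n)" using Suc by simp
      moreover have "S (Suc m) - S m \<in> val_ge (int n)" using val_ge_mono[OF inc[of m]] False Suc.prems by simp
      ultimately show ?thesis using val_ge_add by fastforce
    qed simp
  qed simp
  show ?thesis
  proof (cases "n \<le> m")
    case False
    then show ?thesis using val_ge_uminus[OF up[of m n]] by simp
  qed (use up in simp)
qed

lemma val_limit:
  fixes S :: "nat \<Rightarrow> 'a"
  assumes inc: "\<And>k. S (Suc k) - S k \<in> val_ge (int (Suc k))"
  shows "\<exists>l. \<forall>k. S k - l \<in> val_ge (int k)"
proof -
  have "\<forall>N::int. \<exists>M. \<forall>m\<ge>M. \<forall>n\<ge>M. S m - S n = 0 \<or> N \<le> val (S m - S n)"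
  proof (intro allI exI[of _ "nat _"] impI)
    fix N :: int and m n assume "nat N \<le> m" "nat N \<le> n"
    then show "S m - S n = 0 \<or> N \<le> val (S m - S n)"
      using val_ge_mono[OF val_ge_telescope[OF inc, of m n], of N] unfolding val_ge_def by simp
  qed
  then obtain l where l: "\<forall>N::int. \<exists>M. \<forall>n\<ge>M. S n - l = 0 \<or> N \<le> val (S n - l)"
    using val_complete by blast
  have "S k - l \<in> val_ge (int k)" for k
  proof -
    obtain M where M: "\<forall>n\<ge>M. S n - l = 0 \<or> int k \<le> val (S n - l)" using l by blast
    have "S (max M k) - l \<in> val_ge (int k)" using M unfolding val_ge_def by simp
    moreover have "S k - S (max M k) \<in> val_ge (int k)" using val_ge_telescope[OF inc, of k "max M k"] by simp
    ultimately show ?thesis using val_ge_add by fastforce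
  qed
  then show ?thesis by blast
qed

lemma lattice_chain:
  fixes y :: "nat \<Rightarrow> ('a \<times> 'a) set set"
  assumes adjy: "\<And>k. adj val (y k) (y (Suc k))" and L0: "L0 \<in> y 0"
  shows "\<exists>Ls. Ls 0 = L0 \<and> (\<forall>k. Ls k \<in> y k \<and> scale_set unif (Ls k) \<subset> Ls (Suc k) \<and> Ls (Suc k) \<subset> Ls k)"
  using chain_choice[of y "\<lambda>L L'. scale_set unif L \<subset> L' \<and> L' \<subset> L", OF adj_rep[OF adjy] L0] by simp

lemma non_backtracking_neighbour:
  assumes "submodule L'" "scale_set unif (ospan a b) \<subset> L'" "L' \<subset> ospan a b"
    and "L' \<noteq> ospan (unif *\<^sub>v a) b"
  shows "\<exists>t\<in>ints. L' = ospan (a + t *\<^sub>v b) (unif *\<^sub>v b)"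
proof -
  have "(\<exists>t\<in>ints. L' = ospan (a + t *\<^sub>v b) (unif *\<^sub>v b)) \<or> L' = ospan b (unif *\<^sub>v a)"
    using neighbour_lattices[OF assms(1)] assms(2,3) unfolding scale_ospan by blast
  then show ?thesis using assms(4) ospan_comm by auto
qed

lemma chain_approximation:
  fixes Ls :: "nat \<Rightarrow> ('a \<times> 'a) set"
  assumes lat: "\<And>k. lattice val (Ls k)"
    and chain: "\<And>k. scale_set unif (Ls k) \<subset> Ls (Suc k) \<and> Ls (Suc k) \<subset> Ls k"
    and nb: "\<And>k. Ls (Suc (Suc k)) \<noteq> scale_set unif (Ls k)"
  shows "\<exists>a b S. det2 a b \<noteq> 0 \<and> Ls 0 = ospan a b \<and>
    (\<forall>k. S k \<in> ints \<and> Ls k = ospan (a + S k *\<^sub>v b) (unif ^ k *\<^sub>v b) \<and> S (Suc k) - S k \<in> val_ge (int (Suc k)))"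
proof -
  obtain a b where ab: "det2 a b \<noteq> 0" "Ls 0 = ospan a b" "Ls (Suc 0) = ospan a (unif *\<^sub>v b)"
    using neighbour_basis[OF lat[of 0] submodule_lattice[OF lat[of "Suc 0"]]] chain[of 0] by blast
  define Q where "Q k s \<longleftrightarrow> s \<in> ints \<and> Ls k = ospan (a + s *\<^sub>v b) (unif ^ k *\<^sub>v b)
      \<and> Ls (Suc k) = ospan (a + s *\<^sub>v b) (unif ^ Suc k *\<^sub>v b)" for k s
  have step: "\<exists>s'. Q (Suc k) s' \<and> s' - s \<in> val_ge (int (Suc k))" if Q: "Q k s" for k s
  proof -
    define A where "A = a + s *\<^sub>v b"
    define B where "B = unif ^ Suc k *\<^sub>v b"
    have s: "s \<in> ints" and Lk: "Ls k = ospan A (unif ^ k *\<^sub>v b)" and Lk1: "Ls (Suc k) = ospan A B"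
      using Q unfolding Q_def A_def B_def by auto
    have "scale_set unif (Ls k) = ospan (unif *\<^sub>v A) B"
      unfolding Lk scale_ospan B_def by (simp add: mult.commute)
    then have nbk: "Ls (Suc (Suc k)) \<noteq> ospan (unif *\<^sub>v A) B" using nb[of k] by simp
    obtain t where t: "t \<in> ints" "Ls (Suc (Suc k)) = ospan (A + t *\<^sub>v B) (unif *\<^sub>v B)"
      using non_backtracking_neighbour[OF submodule_lattice[OF lat] _ _ nbk] chain[of "Suc k"]
      unfolding Lk1 by blast
    define s' where "s' = s + t * unif ^ Suc k"
    have A': "A + t *\<^sub>v B = a + s' *\<^sub>v b" unfolding A_def B_def s'_def by (simp add: prod_eq_iff algebra_simps)
    have "Q (Suc k) s'"
      unfolding Q_def
    proof (intro conjI)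
      show "s' \<in> ints" unfolding s'_def using ints_add[OF s ints_mult[OF t(1) unif_power_ints]] .
      show "Ls (Suc k) = ospan (a + s' *\<^sub>v b) (unif ^ Suc k *\<^sub>v b)"
        using Lk1 ospan_shear[OF t(1), of A B] A' B_def by simp
      show "Ls (Suc (Suc k)) = ospan (a + s' *\<^sub>v b) (unif ^ Suc (Suc k) *\<^sub>v b)"
        using t(2) A' B_def by simp
    qed
    moreover have "s' - s \<in> val_ge (int (Suc k))"
      using val_ge_mult[OF _ val_ge_unif_power, of t 0 "Suc k"] t(1) unfolding s'_def ints_eq by simp
    ultimately show ?thesis by blast
  qed
  have "Q 0 0" unfolding Q_def using ab by simp
  then obtain S where "\<forall>k. Q k (S k) \<and> S (Suc k) - S k \<in> val_ge (int (Suc k))"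
    using dependent_nat_choice[of Q "\<lambda>k s s'. s' - s \<in> val_ge (int (Suc k))"] step by blast
  then show ?thesis using ab unfolding Q_def by blast
qed

lemma ray_basis:
  fixes y :: "nat \<Rightarrow> ('a \<times> 'a) set set"
  assumes adjy: "\<And>k. adj val (y k) (y (Suc k))" and nb: "\<And>k. y (Suc (Suc k)) \<noteq> y k"
    and L0: "L0 \<in> y 0"
  shows "\<exists>a b. det2 a b \<noteq> 0 \<and> ospan a b = L0 \<and> (\<forall>k. ospan a (unif ^ k *\<^sub>v b) \<in> y k)"
proof -
  obtain Ls where Ls: "Ls 0 = L0" "\<And>k. Ls k \<in> y k"
    "\<And>k. scale_set unif (Ls k) \<subset> Ls (Suc k) \<and> Ls (Suc k) \<subset> Ls k"
    using lattice_chain[OF adjy L0] by metis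
  have "y k \<in> vertices val" for k using adjy[of k] unfolding adj_def by blast
  then have rep: "y k = hclass (Ls k) \<and> lattice val (Ls k)" for k using vertex_rep Ls(2) by blast
  have nb': "Ls (Suc (Suc k)) \<noteq> scale_set unif (Ls k)" for k
  proof
    assume "Ls (Suc (Suc k)) = scale_set unif (Ls k)"
    then have "y (Suc (Suc k)) = y k"
      using rep[of "Suc (Suc k)"] rep[of k] hclass_scale[OF unif_nonzero, of "Ls k"] by simp
    then show False using nb by blast
  qed
  have "lattice val (Ls k)" for k using rep by blast
  from chain_approximation[of Ls, OF this Ls(3) nb'] obtain a0 b S where ab: "det2 a0 b \<noteq> 0" "Ls 0 = ospan a0 b"
    and S: "\<And>k. S k \<in> ints" "\<And>k. Ls k = ospan (a0 + S k *\<^sub>v b) (unif ^ k *\<^sub>v b)"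
      "\<And>k. S (Suc k) - S k \<in> val_ge (int (Suc k))"
    by blast
  obtain l where l: "\<And>k. S k - l \<in> val_ge (int k)" using val_limit[OF S(3)] by blast
  have "S 0 - l \<in> ints" using l[of 0] by (simp add: ints_eq)
  then have "l \<in> ints" using ints_diff[OF S(1)[of 0]] by force
  define a where "a = a0 + l *\<^sub>v b"
  have "ospan a (unif ^ k *\<^sub>v b) \<in> y k" for k
  proof -
    define r where "r = (l - S k) / unif ^ k"
    have r: "r \<in> ints" unfolding r_def using divide_unif_power[OF val_ge_uminus[OF l[of k]]] by simp
    have "a = (a0 + S k *\<^sub>v b) + r *\<^sub>v (unif ^ k *\<^sub>v b)"
      unfolding a_def r_def using unif_nonzero by (simp add: prod_eq_iff field_simps)
    then have "ospan a (unif ^ k *\<^sub>v b) = ospan (a0 + S k *\<^sub>v b) (unif ^ k *\<^sub>v b)"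
      using ospan_shear[OF r, of "a0 + S k *\<^sub>v b" "unif ^ k *\<^sub>v b"] by simp
    then show ?thesis using S(2) Ls(2) by simp
  qed
  moreover have "det2 a b \<noteq> 0" unfolding a_def det2_shear using ab(1) .
  moreover have "ospan a b = L0" unfolding a_def using ospan_shear[OF \<open>l \<in> ints\<close>] ab(2) Ls(1) by simp
  ultimately show ?thesis by blast
qed

section \<open>Two rays from a common vertex\<close>

text \<open>The neighbour o c + pi L of L = o c + o d only depends on c modulo pi L up to a unit:
  if c = r a + s b with r a unit and s \<in> pi o, then o a + o pi b = o c + o pi d.\<close>

lemma first_step_congruent:
  assumes eq: "ospan a b = ospan c d" and r: "r \<noteq> 0" "val r = 0" and s: "s \<in> val_ge 1"
    and c: "c = r *\<^sub>v a + s *\<^sub>v b"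
  shows "ospan a (unif *\<^sub>v b) = ospan c (unif *\<^sub>v d)"
proof -
  define piL where "piL = ospan (unif *\<^sub>v a) (unif *\<^sub>v b)"
  have piL: "piL = ospan (unif *\<^sub>v c) (unif *\<^sub>v d)"
    unfolding piL_def using scale_ospan[of unif a b] scale_ospan[of unif c d] eq by simp
  have sub_ab: "piL \<subseteq> ospan a (unif *\<^sub>v b)" unfolding piL_def by (rule unif_ospan_subset)
  have sub_cd: "piL \<subseteq> ospan c (unif *\<^sub>v d)" unfolding piL by (rule unif_ospan_subset)
  show ?thesis
  proof (rule ospan_eqI)
    have "inverse r * s \<in> val_ge 1"
      using val_ge_mult[OF _ s, of "inverse r" 0] unit_inverse[OF r] by (simp add: ints_eq)
    then have "(inverse r * s) *\<^sub>v b \<in> piL"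
      using val_ge_comb_in_unif_ospan[OF zero_val_ge, of _ a b] unfolding piL_def by simp
    moreover have "inverse r *\<^sub>v c \<in> ospan c (unif *\<^sub>v d)"
      using submodule_smul[OF submodule_ospan unit_inverse[OF r] ospan_gen1] .
    moreover have "a = inverse r *\<^sub>v c - (inverse r * s) *\<^sub>v b"
      unfolding c using r by (simp add: prod_eq_iff field_simps)
    ultimately show "a \<in> ospan c (unif *\<^sub>v d)"
      using submodule_diff[OF submodule_ospan] subsetD[OF sub_cd] by metis
    show "unif *\<^sub>v b \<in> ospan c (unif *\<^sub>v d)"
      using subsetD[OF sub_cd] ospan_gen2 unfolding piL_def by blast
    have "c = r *\<^sub>v a + (s / unif) *\<^sub>v (unif *\<^sub>v b)" using c unif_nonzero by simp
    then show "c \<in> ospan a (unif *\<^sub>v b)"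
      using ospan_mem_comb[OF unit_ints[OF r] divide_unif[OF s]] by metis
    show "unif *\<^sub>v d \<in> ospan a (unif *\<^sub>v b)"
      using subsetD[OF sub_ab] ospan_gen2 unfolding piL by blast
  qed
qed

text \<open>Consequently both rays can be written
  in the single basis (a, c).\<close>

lemma diverging_rays_coordinate:
  assumes dcd: "det2 c d \<noteq> 0" and eq: "ospan a b = ospan c d"
    and ne: "ospan a (unif *\<^sub>v b) \<noteq> ospan c (unif *\<^sub>v d)"
  shows "\<exists>r s. r \<in> ints \<and> s \<noteq> 0 \<and> val s = 0 \<and> c = r *\<^sub>v a + s *\<^sub>v b"
proof -
  have "c \<in> ospan a b" using eq ospan_gen1 by simp
  then obtain r s where rs: "r \<in> ints" "s \<in> ints" "c = r *\<^sub>v a + s *\<^sub>v b" unfolding mem_ospan by blast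
  have "s \<notin> val_ge 1"
  proof
    assume s: "s \<in> val_ge 1"
    have "r \<notin> val_ge 1"
    proof
      assume "r \<in> val_ge 1"
      then have "c \<in> ospan (unif *\<^sub>v a) (unif *\<^sub>v b)" unfolding rs(3) using val_ge_comb_in_unif_ospan s by blast
      also have "\<dots> = ospan (unif *\<^sub>v c) (unif *\<^sub>v d)" using scale_ospan[of unif a b] scale_ospan[of unif c d] eq by simp
      finally show False using basis_not_in_unif_ospan[OF dcd] by simp
    qed
    then have "r \<noteq> 0" "val r = 0" using ints_cases[OF rs(1)] by auto
    then show False using first_step_congruent[OF eq _ _ s rs(3)] ne by blast
  qed
  then show ?thesis using ints_cases[OF rs(2)] rs by blast
qed

lemma ray_unit_change:
  assumes "r \<in> ints" "s \<noteq> 0" "val s = 0"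
  shows "ospan a (unif ^ k *\<^sub>v (r *\<^sub>v a + s *\<^sub>v b)) = ospan a (unif ^ k *\<^sub>v b)"
proof -
  have "unif ^ k *\<^sub>v (r *\<^sub>v a + s *\<^sub>v b) = (r * unif ^ k) *\<^sub>v a + s *\<^sub>v (unif ^ k *\<^sub>v b)"
    (is "?lhs = _") by (simp add: prod_eq_iff algebra_simps)
  show ?thesis unfolding \<open>?lhs = _\<close> by (rule ospan_unit[OF ints_mult[OF assms(1) unif_power_ints] assms(2,3)])
qed

section \<open>The action of GL_2(F)\<close>

text \<open>Determinant, inverse and product of 2x2 matrices (a, b, c, d), acting on column vectors.\<close>

definition mdet :: "'a \<times> 'a \<times> 'a \<times> 'a \<Rightarrow> 'a" where
  "mdet M = (case M of (a, b, c, d) \<Rightarrow> a * d - b * c)"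

definition minv :: "'a \<times> 'a \<times> 'a \<times> 'a \<Rightarrow> 'a \<times> 'a \<times> 'a \<times> 'a" where
  "minv M = (case M of (a, b, c, d) \<Rightarrow> (d / mdet M, - b / mdet M, - c / mdet M, a / mdet M))"

definition mmul :: "'a \<times> 'a \<times> 'a \<times> 'a \<Rightarrow> 'a \<times> 'a \<times> 'a \<times> 'a \<Rightarrow> 'a \<times> 'a \<times> 'a \<times> 'a" where
  "mmul M N = (case M of (a, b, c, d) \<Rightarrow> case N of (a', b', c', d') \<Rightarrow>
     (a * a' + b * c', a * b' + b * d', c * a' + d * c', c * b' + d * d'))"

lemma GL2_iff: "M \<in> GL2 \<longleftrightarrow> mdet M \<noteq> 0"
  unfolding GL2_def mdet_def by (cases M) auto

lemma mat_vec_comb: "mat_vec M (r *\<^sub>v u + s *\<^sub>v w) = r *\<^sub>v mat_vec M u + s *\<^sub>v mat_vec M w"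
  and mat_vec_smul: "mat_vec M (r *\<^sub>v u) = r *\<^sub>v mat_vec M u"
  unfolding mat_vec_def by (cases M; cases u; cases w; simp add: algebra_simps)+

lemma mmul_vec: "mat_vec (mmul M N) v = mat_vec M (mat_vec N v)"
  unfolding mmul_def mat_vec_def by (cases M; cases N; cases v) (simp add: algebra_simps)

lemma mdet_mmul: "mdet (mmul M N) = mdet M * mdet N"
  unfolding mmul_def mdet_def by (cases M; cases N) (simp add: algebra_simps)

lemma minv_left:
  assumes "M \<in> GL2"
  shows "mat_vec (minv M) (mat_vec M v) = v"
proof -
  obtain a b c d where Md: "M = (a, b, c, d)" by (cases M) auto
  obtain p r where v: "v = (p, r)" by (cases v) auto
  define D where "D = a * d - b * c"
  have D: "D \<noteq> 0" using assms unfolding GL2_iff mdet_def Md D_def by simp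
  have "(d / D) * (a * p + b * r) + (- b / D) * (c * p + d * r) = p"
    and "(- c / D) * (a * p + b * r) + (a / D) * (c * p + d * r) = r"
    using D by (simp_all add: field_simps) (simp_all add: D_def; algebra)+
  then show ?thesis unfolding minv_def mdet_def mat_vec_def Md v D_def by simp
qed

lemma minv_right:
  assumes "M \<in> GL2"
  shows "mat_vec M (mat_vec (minv M) v) = v"
proof -
  obtain a b c d where Md: "M = (a, b, c, d)" by (cases M) auto
  obtain p r where v: "v = (p, r)" by (cases v) auto
  define D where "D = a * d - b * c"
  have D: "D \<noteq> 0" using assms unfolding GL2_iff mdet_def Md D_def by simp
  have "a * ((d / D) * p + (- b / D) * r) + b * ((- c / D) * p + (a / D) * r) = p"
    and "c * ((d / D) * p + (- b / D) * r) + d * ((- c / D) * p + (a / D) * r) = r"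
    using D by (simp_all add: field_simps) (simp_all add: D_def; algebra)+
  then show ?thesis unfolding minv_def mdet_def mat_vec_def Md v D_def by simp
qed

lemma minv_GL2:
  assumes "M \<in> GL2"
  shows "minv M \<in> GL2"
proof -
  obtain a b c d where Md: "M = (a, b, c, d)" by (cases M) auto
  define D where "D = a * d - b * c"
  have D: "D \<noteq> 0" using assms unfolding GL2_iff mdet_def Md D_def by simp
  have "mdet (minv M) = (d / D) * (a / D) - (- b / D) * (- c / D)"
    unfolding minv_def mdet_def Md D_def by simp
  also have "\<dots> = (a * d - b * c) / (D * D)" using D by (simp add: field_simps)
  also have "\<dots> = 1 / D" using D unfolding D_def by simp
  finally show ?thesis unfolding GL2_iff using D by simp
qed

lemma image_ospan: "mat_vec M ` ospan u w = ospan (mat_vec M u) (mat_vec M w)"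
proof
  show "mat_vec M ` ospan u w \<subseteq> ospan (mat_vec M u) (mat_vec M w)"
    unfolding ospan_def using mat_vec_comb by fastforce
  show "ospan (mat_vec M u) (mat_vec M w) \<subseteq> mat_vec M ` ospan u w"
    unfolding ospan_def using mat_vec_comb[symmetric] by blast
qed

lemma det2_image: "det2 (mat_vec M u) (mat_vec M w) = mdet M * det2 u w"
  unfolding mat_vec_def det2_def mdet_def by (cases M; cases u; cases w) (simp add: algebra_simps)

lemma image_scale: "mat_vec M ` scale_set c L = scale_set c (mat_vec M ` L)"
  unfolding scale_set_def image_image
  by (rule image_cong) (auto simp: mat_vec_def split: prod.splits simp: algebra_simps)

lemma mat_act_hclass: "mat_act M (hclass L) = hclass (mat_vec M ` L)"
  unfolding mat_act_def hclass_def using image_scale by blast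

lemma lattice_image: "M \<in> GL2 \<Longrightarrow> lattice val L \<Longrightarrow> lattice val (mat_vec M ` L)"
  unfolding lattice_iff GL2_iff using image_ospan det2_image by (metis mult_eq_0_iff)

lemma mat_act_inv: "M \<in> GL2 \<Longrightarrow> mat_act (minv M) (mat_act M X) = X"
  and mat_act_inv': "M \<in> GL2 \<Longrightarrow> mat_act M (mat_act (minv M) X) = X"
  unfolding mat_act_def image_image by (simp_all add: minv_left minv_right)

lemma vertex_mat_act: "M \<in> GL2 \<Longrightarrow> X \<in> vertices val \<Longrightarrow> mat_act M X \<in> vertices val"
  unfolding vertices_def using mat_act_hclass lattice_image by blast

lemma adj_mat_act:
  assumes M: "M \<in> GL2" and a: "adj val X Y"
  shows "adj val (mat_act M X) (mat_act M Y)"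
proof -
  obtain L L' \<pi> where X: "X \<in> vertices val" and Y: "Y \<in> vertices val" and LX: "L \<in> X" and L'Y: "L' \<in> Y"
    and p: "\<pi> \<noteq> 0" "val \<pi> = 1" and s: "scale_set \<pi> L \<subset> L'" "L' \<subset> L"
    using a unfolding adj_def by blast
  have i: "inj (mat_vec M)" by (rule injI) (metis minv_left[OF M])
  have psub: "A \<subset> B \<Longrightarrow> mat_vec M ` A \<subset> mat_vec M ` B" for A B
    by (simp add: i inj_image_subset_iff inj_image_eq_iff psubset_eq)
  have LX': "mat_vec M ` L \<in> mat_act M X" and LY': "mat_vec M ` L' \<in> mat_act M Y"
    unfolding mat_act_def using LX L'Y by blast+
  have s1: "scale_set \<pi> (mat_vec M ` L) \<subset> mat_vec M ` L'" using psub[OF s(1)] image_scale[of M \<pi> L] by simp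
  have s2: "mat_vec M ` L' \<subset> mat_vec M ` L" using psub[OF s(2)] .
  have "\<exists>La\<in>mat_act M X. \<exists>Lb\<in>mat_act M Y. \<exists>\<pi>'. \<pi>' \<noteq> 0 \<and> val \<pi>' = 1 \<and>
      scale_set \<pi>' La \<subset> Lb \<and> Lb \<subset> La"
    by (rule bexI[OF _ LX'], rule bexI[OF _ LY']) (intro exI[of _ \<pi>] conjI p s1 s2)
  then show ?thesis unfolding adj_def using vertex_mat_act[OF M X] vertex_mat_act[OF M Y] by blast
qed

lemma dist_mat_act:
  assumes M: "M \<in> GL2"
  shows "dist_tree val (mat_act M X) (mat_act M Y) = dist_tree val X Y"
proof -
  have path: "\<exists>p. p 0 = mat_act N X' \<and> p n = mat_act N Y' \<and> (\<forall>i<n. adj val (p i) (p (Suc i)))"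
    if N: "N \<in> GL2" and "p 0 = X'" "p n = Y'" "\<forall>i<n. adj val (p i) (p (Suc i))" for N X' Y' n p
    using that adj_mat_act[OF N] by (intro exI[of _ "\<lambda>i. mat_act N (p i)"]) auto
  have "(\<exists>p. p 0 = mat_act M X \<and> p n = mat_act M Y \<and> (\<forall>i<n. adj val (p i) (p (Suc i))))
      \<longleftrightarrow> (\<exists>p. p 0 = X \<and> p n = Y \<and> (\<forall>i<n. adj val (p i) (p (Suc i))))" for n
  proof
    assume "\<exists>p. p 0 = mat_act M X \<and> p n = mat_act M Y \<and> (\<forall>i<n. adj val (p i) (p (Suc i)))"
    then obtain p where "p 0 = mat_act M X" "p n = mat_act M Y" "\<forall>i<n. adj val (p i) (p (Suc i))" by blast
    from path[OF minv_GL2[OF M] this]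
    show "\<exists>p. p 0 = X \<and> p n = Y \<and> (\<forall>i<n. adj val (p i) (p (Suc i)))" unfolding mat_act_inv[OF M] .
  next
    assume "\<exists>p. p 0 = X \<and> p n = Y \<and> (\<forall>i<n. adj val (p i) (p (Suc i)))"
    then obtain p where "p 0 = X" "p n = Y" "\<forall>i<n. adj val (p i) (p (Suc i))" by blast
    from path[OF M this]
    show "\<exists>p. p 0 = mat_act M X \<and> p n = mat_act M Y \<and> (\<forall>i<n. adj val (p i) (p (Suc i)))" .
  qed
  then show ?thesis unfolding dist_tree_def by simp
qed

lemma mat_act_Ghat: "M \<in> GL2 \<Longrightarrow> mat_act M \<in> Ghat val e"
proof -
  assume M: "M \<in> GL2"
  have "bij_betw (mat_act M) (vertices val) (vertices val)"
    by (rule bij_betw_byWitness[where f'="mat_act (minv M)"])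
       (use mat_act_inv[OF M] mat_act_inv'[OF M] vertex_mat_act[OF M] vertex_mat_act[OF minv_GL2[OF M]] in auto)
  then have "mat_act M \<in> Aut val" unfolding Aut_def using dist_mat_act[OF M] by blast
  then show ?thesis unfolding Ghat_def using M by blast
qed

lemma basis_transitive:
  fixes u w p q :: "'a \<times> 'a"
  assumes "det2 u w \<noteq> 0" "det2 p q \<noteq> 0"
  shows "\<exists>M\<in>GL2. mat_vec M u = p \<and> mat_vec M w = q"
proof -
  obtain u1 u2 w1 w2 p1 p2 q1 q2 where uw: "u = (u1, u2)" "w = (w1, w2)" "p = (p1, p2)" "q = (q1, q2)"
    by (cases u; cases w; cases p; cases q) auto
  define A where "A = (u1, w1, u2, w2)"
  define B where "B = (p1, q1, p2, q2)"
  have A: "A \<in> GL2" using assms(1) unfolding GL2_def A_def det2_def uw by (simp add: algebra_simps)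
  have B: "B \<in> GL2" using assms(2) unfolding GL2_def B_def det2_def uw by (simp add: algebra_simps)
  have "mat_vec (minv A) u = (1, 0)" "mat_vec (minv A) w = (0, 1)"
    using minv_left[OF A, of "(1, 0)"] minv_left[OF A, of "(0, 1)"] unfolding A_def mat_vec_def uw by simp_all
  moreover have "mat_vec B (1, 0) = p" "mat_vec B (0, 1) = q" unfolding B_def mat_vec_def uw by simp_all
  moreover have "mmul B (minv A) \<in> GL2" using A B minv_GL2[OF A] unfolding GL2_iff mdet_mmul by simp
  ultimately show ?thesis by (metis mmul_vec)
qed

section \<open>Adapted bases of a doubly infinite path\<close>

lemma scale_mem_vertex: "X \<in> vertices val \<Longrightarrow> L \<in> X \<Longrightarrow> c \<noteq> 0 \<Longrightarrow> scale_set c L \<in> X"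
  using vertex_rep unfolding hclass_def by blast

lemma mat_act_vertex:
  assumes "X \<in> vertices val" "L \<in> X" "Y \<in> vertices val" "mat_vec M ` L \<in> Y"
  shows "mat_act M X = Y"
  using vertex_rep[OF assms(1,2)] vertex_rep[OF assms(3,4)] mat_act_hclass by metis

lemma path_ray_basis:
  assumes path: "doubly_infinite_path val x" and L0: "L0 \<in> x 0" and sigma: "\<sigma> = 1 \<or> \<sigma> = -1"
  shows "\<exists>a b. det2 a b \<noteq> 0 \<and> ospan a b = L0 \<and> (\<forall>k. ospan a (unif ^ k *\<^sub>v b) \<in> x (\<sigma> * int k))"
proof (rule ray_basis)
  have injx: "inj x" and ax: "\<And>n. adj val (x n) (x (n + 1))"
    using path unfolding doubly_infinite_path_def by auto
  show "adj val (x (\<sigma> * int k)) (x (\<sigma> * int (Suc k)))" for k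
    using sigma
  proof
    assume "\<sigma> = 1"
    then show ?thesis using ax[of "int k"] by (simp add: add.commute)
  next
    assume "\<sigma> = -1"
    moreover have "- int (Suc k) + 1 = - int k" by simp
    ultimately show ?thesis using adj_sym[OF ax[of "- int (Suc k)"]] by simp
  qed
  show "x (\<sigma> * int (Suc (Suc k))) \<noteq> x (\<sigma> * int k)" for k
  proof
    assume "x (\<sigma> * int (Suc (Suc k))) = x (\<sigma> * int k)"
    then have "\<sigma> * int (Suc (Suc k)) = \<sigma> * int k" using injD[OF injx] by blast
    then show False using sigma by auto
  qed
qed (use L0 in simp)

definition adapted_basis :: "(int \<Rightarrow> ('a \<times> 'a) set set) \<Rightarrow> 'a \<times> 'a \<Rightarrow> 'a \<times> 'a \<Rightarrow> bool" where
  "adapted_basis x a c \<longleftrightarrow> det2 a c \<noteq> 0 \<and>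
     (\<forall>k. ospan a (unif ^ k *\<^sub>v c) \<in> x (int k) \<and> ospan c (unif ^ k *\<^sub>v a) \<in> x (- int k))"

lemma det2_unit: "det2 a (r *\<^sub>v a + s *\<^sub>v b) = s * det2 a b"
  by (simp add: det2_def algebra_simps)

lemma path_adapted_basis:
  assumes path: "doubly_infinite_path val x"
  shows "\<exists>a c. adapted_basis x a c"
proof -
  have injx: "inj x" and vx: "\<And>n. x n \<in> vertices val"
    using path unfolding doubly_infinite_path_def by auto
  obtain L0 where L0: "L0 \<in> x 0" using vx[of 0] hclass_mem unfolding vertices_def by blast
  obtain a b where ab: "det2 a b \<noteq> 0" "ospan a b = L0" "\<And>k. ospan a (unif ^ k *\<^sub>v b) \<in> x (int k)"
    using path_ray_basis[OF path L0, of 1] by auto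
  obtain c d where cd: "det2 c d \<noteq> 0" "ospan c d = L0" "\<And>k. ospan c (unif ^ k *\<^sub>v d) \<in> x (- int k)"
    using path_ray_basis[OF path L0, of "-1"] by auto
  have a1: "ospan a (unif *\<^sub>v b) \<in> x 1" and c1: "ospan c (unif *\<^sub>v d) \<in> x (- 1)"
    using ab(3)[of 1] cd(3)[of 1] by simp_all
  have "ospan a (unif *\<^sub>v b) \<noteq> ospan c (unif *\<^sub>v d)"
  proof
    assume "ospan a (unif *\<^sub>v b) = ospan c (unif *\<^sub>v d)"
    then have "x 1 = x (- 1)" using vertex_rep[OF vx a1] vertex_rep[OF vx c1] by simp
    then have "(1::int) = - 1" by (rule injD[OF injx])
    then show False by simp
  qed
  then obtain r s r' s' where rs: "r \<in> ints" "s \<noteq> 0" "val s = 0" "c = r *\<^sub>v a + s *\<^sub>v b"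
    and rs': "r' \<in> ints" "s' \<noteq> 0" "val s' = 0" "a = r' *\<^sub>v c + s' *\<^sub>v d"
    using diverging_rays_coordinate[OF cd(1)] diverging_rays_coordinate[OF ab(1)] ab(2) cd(2) by metis
  have "det2 a c \<noteq> 0" unfolding rs(4) det2_unit using rs(2) ab(1) by simp
  moreover have "ospan a (unif ^ k *\<^sub>v c) \<in> x (int k)" for k
    using ab(3) ray_unit_change[OF rs(1-3)] rs(4) by simp
  moreover have "ospan c (unif ^ k *\<^sub>v a) \<in> x (- int k)" for k
    using cd(3) ray_unit_change[OF rs'(1-3)] rs'(4) by simp
  ultimately show ?thesis unfolding adapted_basis_def by blast
qed

lemma adapted_reflection:
  assumes ad: "adapted_basis x a c" and vx: "\<And>n. x n \<in> vertices val"
  shows "\<exists>M\<in>GL2. \<forall>n. mat_act M (x n) = x (- n)"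
proof -
  have dac: "det2 a c \<noteq> 0" using ad unfolding adapted_basis_def by blast
  obtain M where M: "M \<in> GL2" "mat_vec M a = c" "mat_vec M c = a"
    using basis_transitive[OF dac, of c a] det2_swap[of c a] dac by auto
  have ak: "ospan a (unif ^ k *\<^sub>v c) \<in> x (int k)" and ck: "ospan c (unif ^ k *\<^sub>v a) \<in> x (- int k)" for k
    using ad unfolding adapted_basis_def by blast+
  have forward: "mat_act M (x (int k)) = x (- int k)" for k
    by (rule mat_act_vertex[OF vx ak vx]) (simp add: image_ospan mat_vec_smul M ck)
  have backward: "mat_act M (x (- int k)) = x (int k)" for k
    by (rule mat_act_vertex[OF vx ck vx]) (simp add: image_ospan mat_vec_smul M ak)
  have "mat_act M (x n) = x (- n)" for n
  proof (cases n)
    case (nonneg k)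
    then show ?thesis using forward by (simp add: add.commute)
  next
    case (neg k)
    then show ?thesis using backward[of "Suc k"] by (simp add: add.commute)
  qed
  then show ?thesis using M(1) by blast
qed

lemma adapted_translation:
  assumes ad: "adapted_basis x a c" and vx: "\<And>n. x n \<in> vertices val"
  shows "\<exists>M\<in>GL2. \<forall>n. mat_act M (x n) = x (n + 1)"
proof -
  have dac: "det2 a c \<noteq> 0" using ad unfolding adapted_basis_def by blast
  then have "det2 a (unif *\<^sub>v c) \<noteq> 0" using unif_nonzero by (simp add: det2_def algebra_simps)
  then obtain M where M: "M \<in> GL2" "mat_vec M a = a" "mat_vec M c = unif *\<^sub>v c"
    using basis_transitive[OF dac] by blast
  have ak: "ospan a (unif ^ k *\<^sub>v c) \<in> x (int k)" and ck: "ospan c (unif ^ k *\<^sub>v a) \<in> x (- int k)" for k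
    using ad unfolding adapted_basis_def by blast+
  have forward: "mat_act M (x (int k)) = x (int (Suc k))" for k
  proof (rule mat_act_vertex[OF vx ak vx])
    have "mat_vec M ` ospan a (unif ^ k *\<^sub>v c) = ospan a (unif ^ Suc k *\<^sub>v c)"
      unfolding image_ospan mat_vec_smul M by (simp add: mult.commute)
    then show "mat_vec M ` ospan a (unif ^ k *\<^sub>v c) \<in> x (int (Suc k))" using ak[of "Suc k"] by simp
  qed
  have backward: "mat_act M (x (- int (Suc k))) = x (- int k)" for k
  proof (rule mat_act_vertex[OF vx ck vx])
    have "mat_vec M ` ospan c (unif ^ Suc k *\<^sub>v a) = scale_set unif (ospan c (unif ^ k *\<^sub>v a))"
      unfolding image_ospan mat_vec_smul M scale_ospan by simp
    then show "mat_vec M ` ospan c (unif ^ Suc k *\<^sub>v a) \<in> x (- int k)"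
      using scale_mem_vertex[OF vx ck unif_nonzero] by simp
  qed
  have "mat_act M (x n) = x (n + 1)" for n
  proof (cases n)
    case (nonneg k)
    then show ?thesis using forward by (simp add: add.commute)
  next
    case (neg k)
    then show ?thesis using backward by (simp add: add.commute)
  qed
  then show ?thesis using M(1) by blast
qed

end

theorem mainTheorem7:
  fixes val :: "'a::field \<Rightarrow> int" and e :: nat and x :: "int \<Rightarrow> ('a \<times> 'a) set set"
  assumes "nonarch_local_field val"
    and "e \<ge> 1"
    and "doubly_infinite_path val x"
  shows "\<exists>\<alpha>\<in>Ghat val e. \<exists>\<tau>\<in>Ghat val e. \<forall>n. \<alpha> (x n) = x (- n) \<and> \<tau> (x n) = x (n + 1)"
proof -
  interpret local_field val by (rule local_field.intro) (rule assms(1))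
  have vx: "\<And>n. x n \<in> vertices val" using assms(3) unfolding doubly_infinite_path_def by blast
  obtain a c where ad: "adapted_basis x a c" using path_adapted_basis[OF assms(3)] by blast
  obtain A where A: "A \<in> GL2" "\<forall>n. mat_act A (x n) = x (- n)" using adapted_reflection[OF ad vx] by blast
  obtain T where T: "T \<in> GL2" "\<forall>n. mat_act T (x n) = x (n + 1)" using adapted_translation[OF ad vx] by blast
  show ?thesis
    by (rule bexI[OF _ mat_act_Ghat[OF A(1)]], rule bexI[OF _ mat_act_Ghat[OF T(1)]]) (simp add: A(2) T(2))
qed

end
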